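(* Let $E/\mathbb{Q}$ be the elliptic curve $y^2=x^3+a_4x+a_6$ with $a_4,a_6\in\mathbb{Z}$, let $\mathcal{P}$ be a set of linearly independent points in $E(\mathbb{Q})$, and fix $0<\varepsilon<\frac12$. For $n\in\mathbb{Z}^+$ and $Y>0$, let $A_n(Y)$ be the number of pairs of integers $0<x,y<Y$ such that $(x+ny,y)$ is not simultaneously map-suitable for $E$, kernel-suitable for $E$, and $\varepsilon$-bound-suitable for $\mathcal{P}$. Then there exists $N>0$ such that for all $n>N$, $A_n(Y)=O_\varepsilon(Y^{2-\varepsilon})$ as $Y\to\infty$.
   Context: $d_E(u,v):=v(u^3+a_4uv^2-a_6v^3)$, $D_E(u,v):=4d_E(u,v)$. Map-suitable: $u$, $v$, $3u^2+a_4v^2$, $D_E(u,v)$ all positive. Kernel-suitable: $v>1$ and $\frac{d_E(u,v)-uv}{v^2}>A_0$, where $A_0:=\max\{A:(A,B)\in E_{\mathrm{tor}}(\mathbb{Q})\}$. Heights: $h_W(m/n)=\log\max(|m|,|n|)$ in lowest terms; $h_W(P)$ is $h_W$ of the $x$-coordinate; $\hat h(P)=\frac12\lim_k h_W(kP)/k^2$; $d(\mathcal{P}):=\max_{\delta_i\in\{0,\pm1\}}2\hat h(\sum\delta_iP_i)$; $\delta(E):=\frac18h_W(j(E))+\frac1{12}h_W(\Delta(E))+\frac53$. With $\varepsilon'=\frac{\varepsilon}{1-\varepsilon}$, $(u,v)$ is $\varepsilon$-bound-suitable for $\mathcal{P}$ if $u,v>0$ and $\big(\frac14(uv+v^2)\big)^{1+\varepsilon'}e^{2(1+\varepsilon')(\delta(E)+d(\mathcal{P}))}<d_E(u,v)<(v^2(uv+v^2))^{1+\varepsilon'}$.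 *)

theory Defs
  imports Complex_Main "HOL-Library.Landau_Symbols"
begin

datatype ecpt = Inf | Pt rat rat

definition elliptic :: "int \<Rightarrow> int \<Rightarrow> bool" where
  "elliptic a4 a6 \<longleftrightarrow> 4 * a4 ^ 3 + 27 * a6 ^ 2 \<noteq> 0"

definition on_curve :: "int \<Rightarrow> int \<Rightarrow> ecpt \<Rightarrow> bool" where
  "on_curve a4 a6 P = (case P of Inf \<Rightarrow> True
     | Pt x y \<Rightarrow> y ^ 2 = x ^ 3 + of_int a4 * x + of_int a6)"

fun ec_add :: "int \<Rightarrow> int \<Rightarrow> ecpt \<Rightarrow> ecpt \<Rightarrow> ecpt" where
  "ec_add a4 a6 Inf Q = Q"
| "ec_add a4 a6 (Pt x1 y1) Inf = Pt x1 y1"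
| "ec_add a4 a6 (Pt x1 y1) (Pt x2 y2) =
     (if x1 = x2 \<and> y1 = - y2 then Inf
      else let l = (if x1 = x2 then (3 * x1 ^ 2 + of_int a4) / (2 * y1)
                    else (y2 - y1) / (x2 - x1));
               x3 = l ^ 2 - x1 - x2
           in Pt x3 (l * (x1 - x3) - y1))"

fun ec_neg :: "ecpt \<Rightarrow> ecpt" where
  "ec_neg Inf = Inf"
| "ec_neg (Pt x y) = Pt x (- y)"

fun ec_nmul :: "int \<Rightarrow> int \<Rightarrow> nat \<Rightarrow> ecpt \<Rightarrow> ecpt" where
  "ec_nmul a4 a6 0 P = Inf"
| "ec_nmul a4 a6 (Suc k) P = ec_add a4 a6 P (ec_nmul a4 a6 k P)"

definition ec_zmul :: "int \<Rightarrow> int \<Rightarrow> int \<Rightarrow> ecpt \<Rightarrow> ecpt" where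
  "ec_zmul a4 a6 k P = (if k \<ge> 0 then ec_nmul a4 a6 (nat k) P
                         else ec_neg (ec_nmul a4 a6 (nat (- k)) P))"

definition ec_sum :: "int \<Rightarrow> int \<Rightarrow> ecpt list \<Rightarrow> ecpt" where
  "ec_sum a4 a6 Ps = foldr (ec_add a4 a6) Ps Inf"

definition torsion :: "int \<Rightarrow> int \<Rightarrow> ecpt \<Rightarrow> bool" where
  "torsion a4 a6 P \<longleftrightarrow> on_curve a4 a6 P \<and> (\<exists>k>0. ec_nmul a4 a6 k P = Inf)"

definition lin_indep :: "int \<Rightarrow> int \<Rightarrow> ecpt list \<Rightarrow> bool" where
  "lin_indep a4 a6 Ps \<longleftrightarrow> (\<forall>P\<in>set Ps. on_curve a4 a6 P) \<and>
     (\<forall>cs :: int list. length cs = length Ps \<longrightarrow>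
        ec_sum a4 a6 (map2 (ec_zmul a4 a6) cs Ps) = Inf \<longrightarrow> (\<forall>c\<in>set cs. c = 0))"

definition hW :: "rat \<Rightarrow> real" where
  "hW r = (case quotient_of r of (m, n) \<Rightarrow> ln (real_of_int (max \<bar>m\<bar> \<bar>n\<bar>)))"

definition hW_pt :: "ecpt \<Rightarrow> real" where
  "hW_pt P = (case P of Inf \<Rightarrow> 0 | Pt x y \<Rightarrow> hW x)"

definition canon_height :: "int \<Rightarrow> int \<Rightarrow> ecpt \<Rightarrow> real" where
  "canon_height a4 a6 P = 1/2 * lim (\<lambda>k::nat. hW_pt (ec_nmul a4 a6 k P) / (real k) ^ 2)"

definition dP :: "int \<Rightarrow> int \<Rightarrow> ecpt list \<Rightarrow> real" where
  "dP a4 a6 Ps = Max {2 * canon_height a4 a6 (ec_sum a4 a6 (map2 (ec_zmul a4 a6) ds Ps)) | ds.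
                      length ds = length Ps \<and> set ds \<subseteq> {-1, 0, 1}}"

definition disc :: "int \<Rightarrow> int \<Rightarrow> int" where
  "disc a4 a6 = -16 * (4 * a4 ^ 3 + 27 * a6 ^ 2)"

definition jinv :: "int \<Rightarrow> int \<Rightarrow> rat" where
  "jinv a4 a6 = - 1728 * of_int ((4 * a4) ^ 3) / of_int (disc a4 a6)"

definition deltaE :: "int \<Rightarrow> int \<Rightarrow> real" where
  "deltaE a4 a6 = 1/8 * hW (jinv a4 a6) + 1/12 * hW (of_int (disc a4 a6)) + 5/3"

definition dE :: "int \<Rightarrow> int \<Rightarrow> int \<Rightarrow> int \<Rightarrow> int" where
  "dE a4 a6 u v = v * (u ^ 3 + a4 * u * v ^ 2 - a6 * v ^ 3)"

definition DE :: "int \<Rightarrow> int \<Rightarrow> int \<Rightarrow> int \<Rightarrow> int" where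
  "DE a4 a6 u v = 4 * dE a4 a6 u v"

definition map_suitable :: "int \<Rightarrow> int \<Rightarrow> int \<Rightarrow> int \<Rightarrow> bool" where
  "map_suitable a4 a6 u v \<longleftrightarrow> u > 0 \<and> v > 0 \<and> 3 * u ^ 2 + a4 * v ^ 2 > 0 \<and> DE a4 a6 u v > 0"

text \<open>A_0 is the maximal x-coordinate of an affine torsion point; the condition
  "(dE - uv)/v^2 > A_0" is expressed as "exceeds the x-coordinate of every affine
  torsion point".\<close>
definition kernel_suitable :: "int \<Rightarrow> int \<Rightarrow> int \<Rightarrow> int \<Rightarrow> bool" where
  "kernel_suitable a4 a6 u v \<longleftrightarrow> v > 1 \<and>
     (\<forall>A B. torsion a4 a6 (Pt A B) \<longrightarrow>
        real_of_int (dE a4 a6 u v - u * v) / real_of_int (v ^ 2) > real_of_rat A)"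

definition bound_suitable :: "int \<Rightarrow> int \<Rightarrow> ecpt list \<Rightarrow> real \<Rightarrow> int \<Rightarrow> int \<Rightarrow> bool" where
  "bound_suitable a4 a6 Ps \<epsilon> u v \<longleftrightarrow> u > 0 \<and> v > 0 \<and>
     (let e' = \<epsilon> / (1 - \<epsilon>); uu = real_of_int u; vv = real_of_int v;
          d = real_of_int (dE a4 a6 u v)
      in (1/4 * (uu * vv + vv ^ 2)) powr (1 + e') * exp (2 * (1 + e') * (deltaE a4 a6 + dP a4 a6 Ps)) < d
         \<and> d < (vv ^ 2 * (uu * vv + vv ^ 2)) powr (1 + e'))"

definition A_count :: "int \<Rightarrow> int \<Rightarrow> ecpt list \<Rightarrow> real \<Rightarrow> nat \<Rightarrow> real \<Rightarrow> nat" where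
  "A_count a4 a6 Ps \<epsilon> n Y = card {(x :: int, y :: int). 0 < x \<and> real_of_int x < Y \<and> 0 < y \<and> real_of_int y < Y \<and>
      \<not> (map_suitable a4 a6 (x + int n * y) y \<and> kernel_suitable a4 a6 (x + int n * y) y \<and>
         bound_suitable a4 a6 Ps \<epsilon> (x + int n * y) y)}"

end

theory Submission
  imports Defs "HOL-Computational_Algebra.Polynomial_Factorial"
begin

(* Write \<alpha> = 1 + \<epsilon>' = 1 / (1 - \<epsilon>).  For v \<ge> 1 and u > n v with n large, d_E(u, v) =
   v (u^3 + a u v^2 - b v^3) lies between v u^3 / 2 and 3 v u^3 / 2.  Hence (u, v) is map- and
   kernel-suitable (the latter because u \<ge> n exceeds the x-coordinate of every torsion point),
   the lower bound of bound-suitability holds because u^(4 - 2 \<alpha>) is large, and the upper bound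
   holds as soon as v \<ge> 2 u^(1 - \<epsilon>), since then (u v^3)^\<alpha> \<ge> 4 v u^3.  So a pair (x + n y, y) with
   0 < x, y < Y can only be unsuitable if y \<le> 2 (1 + n) Y^(1 - \<epsilon>), which leaves O(Y^(2 - \<epsilon>)) pairs.

   Torsion points have bounded x-coordinate by a naive-height argument: Bezout identities whose
   resultant is the discriminant give H(x(2P)) \<ge> H(x(P))^4 / C and
   H(x(P + Q)) H(x(Q - P)) \<ge> H(x(P))^2 H(x(Q))^2 / C, which bound H(x(P)) when applied to the
   point Q of largest height in the finite orbit of P. *)

definition naive_height :: "rat \<Rightarrow> int" where
  "naive_height r = (case quotient_of r of (m, e) \<Rightarrow> max \<bar>m\<bar> \<bar>e\<bar>)"

lemma quotient_of_naive_height: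
  obtains m e where "quotient_of r = (m, e)" "e > 0" "coprime m e" "of_int m = r * of_int e"
    "naive_height r = max \<bar>m\<bar> \<bar>e\<bar>"
proof -
  obtain m e where q: "quotient_of r = (m, e)" by (cases "quotient_of r")
  have e: "e > 0" using quotient_of_denom_pos[OF q] .
  have "of_int m = r * of_int e" using quotient_of_div[OF q] e by (simp add: field_simps)
  moreover have "naive_height r = max \<bar>m\<bar> \<bar>e\<bar>" unfolding naive_height_def q by simp
  ultimately show thesis using q e quotient_of_coprime[OF q] by (intro that)
qed

lemma naive_height_ge_1: "naive_height r \<ge> 1"
  by (rule quotient_of_naive_height[of r]) (simp add: le_max_iff_disj)

lemma abs_le_naive_height: "\<bar>real_of_rat r\<bar> \<le> real_of_int (naive_height r)"
proof (rule quotient_of_naive_height[of r])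
  fix m e assume e: "e > 0" and m: "of_int m = r * of_int e" and h: "naive_height r = max \<bar>m\<bar> \<bar>e\<bar>"
  have "\<bar>real_of_rat r\<bar> \<le> \<bar>real_of_rat r\<bar> * real_of_int e" using e by (simp add: mult_le_cancel_left1)
  also have "\<dots> = \<bar>real_of_int m\<bar>" using arg_cong[OF m, of real_of_rat] e by (simp add: of_rat_mult abs_mult)
  finally show ?thesis unfolding h by (simp add: le_max_iff_disj)
qed

lemma naive_height_fraction:
  assumes "B \<noteq> 0" "r = of_int A / of_int B"
  obtains k where "k dvd A" "k dvd B" "max \<bar>A\<bar> \<bar>B\<bar> = \<bar>k\<bar> * naive_height r"
proof (rule quotient_of_naive_height[of r])
  fix p q assume q: "q > 0" and cop: "coprime p q" and pq: "of_int p = r * of_int q"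
    and h: "naive_height r = max \<bar>p\<bar> \<bar>q\<bar>"
  have "of_int (A * q) = (of_int (p * B) :: rat)" using assms pq by (simp add: field_simps)
  then have eq: "A * q = p * B" by (simp only: of_int_eq_iff)
  then have "q dvd B" using cop by (metis coprime_commute coprime_dvd_mult_right_iff dvd_triv_right)
  then obtain k where Bk: "B = q * k" by blast
  then have Ak: "A = p * k" using eq q by (simp add: mult.left_commute)
  have "max \<bar>A\<bar> \<bar>B\<bar> = \<bar>k\<bar> * max \<bar>p\<bar> \<bar>q\<bar>" unfolding Ak Bk abs_mult
    by (simp add: max_mult_distrib_left mult.commute)
  with Ak Bk h show thesis by (intro that[of k]) simp_all
qed

lemma naive_height_0 [simp]: "naive_height 0 = 1"
  by (simp add: naive_height_def)

lemma dvd_of_dvd_mult_coprime_powers: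
  fixes d R u v :: int
  assumes "coprime u v" "d dvd R * u ^ N" "d dvd R * v ^ N"
  shows "d dvd R"
proof -
  have "d dvd gcd (R * u ^ N) (R * v ^ N)" using assms(2,3) by simp
  also have "\<dots> = \<bar>R\<bar>" using assms(1)
    by (simp add: gcd_mult_distrib_int[symmetric] coprime_iff_gcd_eq_1[symmetric])
  finally show ?thesis by simp
qed

lemma dvd_of_dvd_mult_gcd3_powers:
  fixes d R u0 u1 u2 :: int
  assumes "gcd u0 (gcd u1 u2) = 1" "d dvd R * u0 ^ N" "d dvd R * u1 ^ N" "d dvd R * u2 ^ N"
  shows "d dvd R"
proof -
  have "d dvd gcd (R * u1 ^ N) (R * u2 ^ N)" using assms(3,4) by simp
  also have "\<dots> = \<bar>R * gcd u1 u2 ^ N\<bar>" by (simp add: gcd_mult_distrib_int[symmetric] gcd_exp abs_mult)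
  finally have "d dvd R * gcd u1 u2 ^ N" by simp
  moreover have "coprime u0 (gcd u1 u2)" using assms(1) by (simp add: coprime_iff_gcd_eq_1)
  ultimately show ?thesis using dvd_of_dvd_mult_coprime_powers assms(2) by blast
qed

lemma content_linear_poly: "content [:c0, c1:] = gcd c0 (c1 :: int)"
  by (simp add: content_def cCons_def)

lemma content_quadratic_poly: "content [:c0, c1, c2:] = gcd c0 (gcd c1 (c2 :: int))"
  by (simp add: content_def cCons_def gcd.commute gcd.left_commute)

lemma gcd3_product_coeffs_eq_1:
  fixes m1 e1 m2 e2 :: int
  assumes "coprime m1 e1" "coprime m2 e2"
  shows "gcd (e1 * e2) (gcd (m1 * e2 + m2 * e1) (m1 * m2)) = 1"
proof -
  have "[:m1, -e1:] * [:m2, -e2:] = [:m1 * m2, -(m1 * e2 + m2 * e1), e1 * e2:]"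
    by (simp add: algebra_simps)
  moreover have "content ([:m1, -e1:] * [:m2, -e2:]) = 1"
    using assms content_mult[of "[:m1, -e1:]" "[:m2, -e2:]"]
    by (simp add: content_linear_poly coprime_iff_gcd_eq_1)
  ultimately have "content [:m1 * m2, -(m1 * e2 + m2 * e1), e1 * e2:] = 1" by metis
  then have "gcd (m1 * m2) (gcd (m1 * e2 + m2 * e1) (e1 * e2)) = 1"
    by (simp only: content_quadratic_poly gcd_neg1_int)
  then show ?thesis by (metis gcd.commute gcd.left_commute)
qed

lemma proportional_to_primitive:
  fixes T0 T1 T2 W0 W1 W2 :: int
  assumes "gcd T0 (gcd T1 T2) = 1" "T0 \<noteq> 0" "T1 * W0 = W1 * T0" "T2 * W0 = W2 * T0"
  obtains k where "W0 = k * T0" "W1 = k * T1" "W2 = k * T2"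
proof -
  have "T0 dvd W0 * T0 ^ 1" "T0 dvd W0 * T1 ^ 1" "T0 dvd W0 * T2 ^ 1"
    using assms(3,4) by (simp_all add: mult.commute)
  then have "T0 dvd W0" by (rule dvd_of_dvd_mult_gcd3_powers[OF assms(1)])
  then obtain k where k: "W0 = k * T0" by (metis dvd_def mult.commute)
  have "W1 = k * T1" "W2 = k * T2" using assms(2-4) unfolding k by (simp_all add: algebra_simps)
  with k show thesis by (rule that)
qed

definition lincomb :: "int list \<Rightarrow> int list \<Rightarrow> int" where
  "lincomb cs xs = sum_list (map2 (*) cs xs)"

definition coeff_sum :: "int list \<Rightarrow> int" where
  "coeff_sum cs = sum_list (map abs cs)"

lemma coeff_sum_nonneg: "coeff_sum cs \<ge> 0"
  unfolding coeff_sum_def by (induction cs) auto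

lemma sum_list_coeff_sum_nonneg: "sum_list (map coeff_sum Cs) \<ge> 0"
  by (induction Cs) (simp_all add: coeff_sum_nonneg)

lemma dvd_lincomb: "\<forall>x\<in>set xs. k dvd x \<Longrightarrow> k dvd lincomb cs xs"
  unfolding lincomb_def by (induction cs xs rule: list_induct2') auto

lemma abs_lincomb_le:
  assumes "\<forall>x\<in>set xs. \<bar>x\<bar> \<le> B" "0 \<le> B"
  shows "\<bar>lincomb cs xs\<bar> \<le> coeff_sum cs * B"
  using assms
proof (induction cs xs rule: list_induct2')
  case (2 c cs)
  then show ?case using coeff_sum_nonneg[of "c # cs"] by (simp add: lincomb_def)
next
  case (4 c cs x xs)
  then have "\<bar>c * x + lincomb cs xs\<bar> \<le> \<bar>c\<bar> * B + coeff_sum cs * B"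
    by (auto simp: abs_mult intro!: order_trans[OF abs_triangle_ineq] add_mono mult_left_mono)
  then show ?case by (simp add: lincomb_def coeff_sum_def distrib_right)
qed (simp_all add: lincomb_def coeff_sum_def)

lemma abs_lincomb_lincomb_le:
  assumes "\<forall>x\<in>set xs. \<bar>x\<bar> \<le> B" "0 \<le> B" "\<forall>F\<in>set Fs. \<bar>F\<bar> \<le> B'" "0 \<le> B'"
  shows "\<bar>lincomb (map (\<lambda>c. lincomb c xs) Cs) Fs\<bar> \<le> sum_list (map coeff_sum Cs) * B * B'"
proof -
  have "coeff_sum (map (\<lambda>c. lincomb c xs) Cs) \<le> sum_list (map coeff_sum Cs) * B"
    using abs_lincomb_le[OF assms(1,2)]
    by (induction Cs) (auto simp: coeff_sum_def distrib_right intro: add_mono)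
  then show ?thesis
    using abs_lincomb_le[OF assms(3,4)] assms(4) by (meson mult_right_mono order_trans)
qed

definition cubic_monomials :: "int \<Rightarrow> int \<Rightarrow> int list" where
  "cubic_monomials m e = [m ^ 3, m ^ 2 * e, m * e ^ 2, e ^ 3]"

definition quadratic_monomials :: "int \<Rightarrow> int \<Rightarrow> int \<Rightarrow> int list" where
  "quadratic_monomials t0 t1 t2 = [t0 ^ 2, t1 ^ 2, t2 ^ 2, t0 * t1, t0 * t2, t1 * t2]"

lemma abs_mult_power_le: "\<bar>x\<bar> \<le> M \<Longrightarrow> \<bar>y\<bar> \<le> M \<Longrightarrow> \<bar>x ^ i * y ^ j\<bar> \<le> M ^ (i + j)" for x y M :: int
  by (simp add: abs_mult power_abs power_add mult_mono power_mono)

lemma cubic_monomials_le: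
  "\<bar>m\<bar> \<le> M \<Longrightarrow> \<bar>e\<bar> \<le> M \<Longrightarrow> \<forall>x\<in>set (cubic_monomials m e). \<bar>x\<bar> \<le> M ^ 3"
proof -
  assume "\<bar>m\<bar> \<le> M" "\<bar>e\<bar> \<le> M"
  then have "\<bar>m ^ i * e ^ j\<bar> \<le> M ^ 3" if "i + j = 3" for i j
    using abs_mult_power_le that by metis
  from this[of 3 0] this[of 2 1] this[of 1 2] this[of 0 3] show ?thesis
    by (simp add: cubic_monomials_def)
qed

lemma quadratic_monomials_le:
  assumes "\<bar>t0\<bar> \<le> T" "\<bar>t1\<bar> \<le> T" "\<bar>t2\<bar> \<le> T"
  shows "\<forall>x\<in>set (quadratic_monomials t0 t1 t2). \<bar>x\<bar> \<le> T ^ 2"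
proof -
  have sq: "\<bar>x * y\<bar> \<le> T ^ 2" if "\<bar>x\<bar> \<le> T" "\<bar>y\<bar> \<le> T" for x y
    using abs_mult_power_le[OF that, of 1 1] by (simp add: power2_eq_square)
  show ?thesis
    using sq[OF assms(1) assms(1)] sq[OF assms(2) assms(2)] sq[OF assms(3) assms(3)]
      sq[OF assms(1) assms(2)] sq[OF assms(1) assms(3)] sq[OF assms(2) assms(3)]
    by (simp add: quadratic_monomials_def power2_eq_square)
qed

section \<open>Height growth under duplication\<close>

fun x_coord :: "ecpt \<Rightarrow> rat" where
  "x_coord Inf = 0"
| "x_coord (Pt x y) = x"

definition dbl_num :: "int \<Rightarrow> int \<Rightarrow> int \<Rightarrow> int \<Rightarrow> int" where
  "dbl_num a b m e = m ^ 4 - 2 * a * m ^ 2 * e ^ 2 - 8 * b * m * e ^ 3 + a ^ 2 * e ^ 4"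

definition dbl_den :: "int \<Rightarrow> int \<Rightarrow> int \<Rightarrow> int \<Rightarrow> int" where
  "dbl_den a b m e = 4 * e * (m ^ 3 + a * m * e ^ 2 + b * e ^ 3)"

lemma x_coord_double:
  fixes x y :: rat
  assumes y: "y \<noteq> 0" and c: "y ^ 2 = x ^ 3 + of_int a * x + of_int b"
    and m: "of_int m = x * of_int e" and e: "e \<noteq> 0"
  shows "dbl_den a b m e \<noteq> 0"
    and "x_coord (ec_add a b (Pt x y) (Pt x y)) = of_int (dbl_num a b m e) / of_int (dbl_den a b m e)"
proof -
  have den: "of_int (dbl_den a b m e) = 4 * of_int e ^ 4 * y ^ 2"
    unfolding dbl_den_def c by (simp add: m algebra_simps power2_eq_square power3_eq_cube power4_eq_xxxx)
  with y e show den0: "dbl_den a b m e \<noteq> 0" by (auto simp del: of_int_eq_0_iff)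
  define l where "l = (3 * x ^ 2 + of_int a) / (2 * y)"
  have l: "l * (2 * y) = 3 * x ^ 2 + of_int a" unfolding l_def using y by simp
  have "(l ^ 2 - 2 * x) * of_int (dbl_den a b m e) = of_int (dbl_num a b m e)"
    unfolding den by (simp add: dbl_num_def m) (use l c in algebra)
  moreover have "x_coord (ec_add a b (Pt x y) (Pt x y)) = l ^ 2 - 2 * x"
    using y unfolding l_def by (simp add: Let_def)
  ultimately show "x_coord (ec_add a b (Pt x y) (Pt x y)) = of_int (dbl_num a b m e) / of_int (dbl_den a b m e)"
    using den0 by (simp add: eq_divide_eq)
qed

(* Found by solving the linear systems behind dbl_bezout_e and dbl_bezout_m. *)
definition dbl_cofactors_e :: "int \<Rightarrow> int \<Rightarrow> int list list" where
  "dbl_cofactors_e a b = [[0, 12, 0, 16 * a], [-3, 0, 5 * a, 27 * b]]"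

definition dbl_cofactors_m :: "int \<Rightarrow> int \<Rightarrow> int list list" where
  "dbl_cofactors_m a b =
     [[108 * b ^ 2 + 16 * a ^ 3, -4 * a ^ 2 * b, 88 * a * b ^ 2 + 12 * a ^ 4, 96 * b ^ 3 + 12 * a ^ 3 * b],
      [a ^ 2 * b, 32 * a * b ^ 2 + 5 * a ^ 4, 192 * b ^ 3 + 26 * a ^ 3 * b, -24 * a ^ 2 * b ^ 2 - 3 * a ^ 5]]"

lemma dbl_bezout_e:
  "lincomb (map (\<lambda>c. lincomb c (cubic_monomials m e)) (dbl_cofactors_e a b)) [dbl_num a b m e, dbl_den a b m e]
     = 4 * (4 * a ^ 3 + 27 * b ^ 2) * e ^ 7"
  by (simp add: dbl_cofactors_e_def lincomb_def cubic_monomials_def dbl_num_def dbl_den_def) algebra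

lemma dbl_bezout_m:
  "lincomb (map (\<lambda>c. lincomb c (cubic_monomials m e)) (dbl_cofactors_m a b)) [dbl_num a b m e, dbl_den a b m e]
     = 4 * (4 * a ^ 3 + 27 * b ^ 2) * m ^ 7"
  by (simp add: dbl_cofactors_m_def lincomb_def cubic_monomials_def dbl_num_def dbl_den_def) algebra

definition dbl_cofactor_norm :: "int \<Rightarrow> int \<Rightarrow> int" where
  "dbl_cofactor_norm a b = sum_list (map coeff_sum (dbl_cofactors_e a b @ dbl_cofactors_m a b))"

lemma dbl_common_divisor_dvd:
  assumes "coprime m e" "k dvd dbl_num a b m e" "k dvd dbl_den a b m e"
  shows "k dvd 4 * (4 * a ^ 3 + 27 * b ^ 2)"
proof -
  have k: "\<forall>F\<in>set [dbl_num a b m e, dbl_den a b m e]. k dvd F" using assms(2,3) by simp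
  have "k dvd 4 * (4 * a ^ 3 + 27 * b ^ 2) * m ^ 7"
    using dvd_lincomb[OF k, of "map (\<lambda>c. lincomb c (cubic_monomials m e)) (dbl_cofactors_m a b)"]
    unfolding dbl_bezout_m .
  moreover have "k dvd 4 * (4 * a ^ 3 + 27 * b ^ 2) * e ^ 7"
    using dvd_lincomb[OF k, of "map (\<lambda>c. lincomb c (cubic_monomials m e)) (dbl_cofactors_e a b)"]
    unfolding dbl_bezout_e .
  ultimately show ?thesis by (rule dvd_of_dvd_mult_coprime_powers[OF assms(1)])
qed

lemma dbl_forms_lower_bound:
  assumes "max \<bar>dbl_num a b m e\<bar> \<bar>dbl_den a b m e\<bar> \<le> B"
  shows "\<bar>4 * (4 * a ^ 3 + 27 * b ^ 2)\<bar> * max \<bar>m\<bar> \<bar>e\<bar> ^ 7 \<le> dbl_cofactor_norm a b * max \<bar>m\<bar> \<bar>e\<bar> ^ 3 * B"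
proof -
  define M where "M = max \<bar>m\<bar> \<bar>e\<bar>"
  have mM: "\<bar>m\<bar> \<le> M" "\<bar>e\<bar> \<le> M" unfolding M_def by simp_all
  have F: "\<forall>F\<in>set [dbl_num a b m e, dbl_den a b m e]. \<bar>F\<bar> \<le> B" using assms by simp
  have B: "0 \<le> M ^ 3" "0 \<le> B" using mM assms by (simp_all, linarith)
  have bez: "\<bar>lincomb (map (\<lambda>c. lincomb c (cubic_monomials m e)) Cs) [dbl_num a b m e, dbl_den a b m e]\<bar>
      \<le> dbl_cofactor_norm a b * M ^ 3 * B" if "Cs \<in> {dbl_cofactors_e a b, dbl_cofactors_m a b}" for Cs
  proof -
    have "sum_list (map coeff_sum Cs) \<le> dbl_cofactor_norm a b"
      using that sum_list_coeff_sum_nonneg unfolding dbl_cofactor_norm_def by auto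
    then show ?thesis using abs_lincomb_lincomb_le[OF cubic_monomials_le[OF mM] B(1) F B(2), where Cs = Cs] B
      by (meson mult_right_mono order_trans)
  qed
  have "\<bar>4 * (4 * a ^ 3 + 27 * b ^ 2) * e ^ 7\<bar> \<le> dbl_cofactor_norm a b * M ^ 3 * B"
    "\<bar>4 * (4 * a ^ 3 + 27 * b ^ 2) * m ^ 7\<bar> \<le> dbl_cofactor_norm a b * M ^ 3 * B"
    using bez[of "dbl_cofactors_e a b"] bez[of "dbl_cofactors_m a b"] unfolding dbl_bezout_e dbl_bezout_m by simp_all
  moreover have "M = \<bar>m\<bar> \<or> M = \<bar>e\<bar>" unfolding M_def by linarith
  ultimately show ?thesis unfolding M_def[symmetric] by (auto simp: abs_mult power_abs)
qed

lemma double_height_bound: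
  fixes x y :: rat
  assumes ell: "elliptic a b" and y: "y \<noteq> 0" and c: "y ^ 2 = x ^ 3 + of_int a * x + of_int b"
  shows "naive_height x ^ 4 \<le> dbl_cofactor_norm a b * naive_height (x_coord (ec_add a b (Pt x y) (Pt x y)))"
proof -
  obtain m e where "e > 0" "coprime m e" and m: "of_int m = x * of_int e" and hx: "naive_height x = max \<bar>m\<bar> \<bar>e\<bar>"
    by (rule quotient_of_naive_height)
  define D where "D = 4 * (4 * a ^ 3 + 27 * b ^ 2)"
  have "D \<noteq> 0" using ell unfolding D_def elliptic_def by simp
  define h where "h = naive_height (x_coord (ec_add a b (Pt x y) (Pt x y)))"
  have "e \<noteq> 0" using \<open>e > 0\<close> by simp
  obtain k where "k dvd dbl_num a b m e" "k dvd dbl_den a b m e"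
    and hk: "max \<bar>dbl_num a b m e\<bar> \<bar>dbl_den a b m e\<bar> = \<bar>k\<bar> * h"
    unfolding h_def by (rule naive_height_fraction[OF x_coord_double[OF y c m \<open>e \<noteq> 0\<close>]])
  then have "\<bar>k\<bar> \<le> \<bar>D\<bar>"
    using dbl_common_divisor_dvd[OF \<open>coprime m e\<close>] \<open>D \<noteq> 0\<close> dvd_imp_le_int unfolding D_def by blast
  then have "max \<bar>dbl_num a b m e\<bar> \<bar>dbl_den a b m e\<bar> \<le> \<bar>D\<bar> * h"
    unfolding hk using naive_height_ge_1[of "x_coord (ec_add a b (Pt x y) (Pt x y))"] h_def
    by (simp add: mult_right_mono)
  from dbl_forms_lower_bound[OF this]
  have "(\<bar>D\<bar> * naive_height x ^ 3) * naive_height x ^ 4 \<le> (\<bar>D\<bar> * naive_height x ^ 3) * (dbl_cofactor_norm a b * h)"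
    unfolding hx D_def[symmetric] by (simp add: algebra_simps flip: power_add)
  moreover have "\<bar>D\<bar> * naive_height x ^ 3 > 0" using \<open>D \<noteq> 0\<close> naive_height_ge_1[of x] by simp
  ultimately show ?thesis unfolding h_def by (simp only: mult_le_cancel_left_pos)
qed

section \<open>Heights of sums and differences\<close>

lemma x_coord_add_sub:
  fixes x1 y1 x2 y2 :: rat
  assumes c1: "y1 ^ 2 = x1 ^ 3 + of_int a * x1 + of_int b" and c2: "y2 ^ 2 = x2 ^ 3 + of_int a * x2 + of_int b"
    and ne: "x1 \<noteq> x2"
  defines "x3 \<equiv> x_coord (ec_add a b (Pt x2 y2) (Pt x1 y1))"
    and "x4 \<equiv> x_coord (ec_add a b (Pt x1 y1) (Pt x2 (- y2)))"
  shows "(x3 + x4) * (x1 - x2) ^ 2 = 2 * (x1 * x2 + of_int a) * (x1 + x2) + 4 * of_int b"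
    and "x3 * x4 * (x1 - x2) ^ 2 = (x1 * x2 - of_int a) ^ 2 - 4 * of_int b * (x1 + x2)"
proof -
  define l where "l = (y1 - y2) / (x1 - x2)"
  define l' where "l' = (- y2 - y1) / (x2 - x1)"
  have l: "l * (x1 - x2) = y1 - y2" and l': "l' * (x2 - x1) = - y2 - y1"
    unfolding l_def l'_def using ne by simp_all
  have "x3 = l ^ 2 - x2 - x1" "x4 = l' ^ 2 - x1 - x2"
    using ne unfolding x3_def x4_def l_def l'_def by (simp_all add: Let_def)
  then show "(x3 + x4) * (x1 - x2) ^ 2 = 2 * (x1 * x2 + of_int a) * (x1 + x2) + 4 * of_int b"
    and "x3 * x4 * (x1 - x2) ^ 2 = (x1 * x2 - of_int a) ^ 2 - 4 * of_int b * (x1 + x2)"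
    using l l' c1 c2 ne by algebra+
qed

(* For x_i = m_i / e_i on E with x1 \<noteq> x2, and t0, t1, t2 the coefficients of (e1 X - m1) (e2 X - m2),
   these are (e1 e2 (x1 - x2))^2 times 1, x(P2 + P1) + x(P1 - P2) and x(P2 + P1) x(P1 - P2). *)
definition sd_forms :: "int \<Rightarrow> int \<Rightarrow> int \<Rightarrow> int \<Rightarrow> int \<Rightarrow> int list" where
  "sd_forms a b t0 t1 t2 =
     [t1 ^ 2 - 4 * t0 * t2, 2 * (t2 + a * t0) * t1 + 4 * b * t0 ^ 2, (t2 - a * t0) ^ 2 - 4 * b * t0 * t1]"

(* Found by solving the linear systems behind sd_bezout_0, sd_bezout_1 and sd_bezout_2. *)
definition sd_cofactors_0 :: "int \<Rightarrow> int \<Rightarrow> int list list" where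
  "sd_cofactors_0 a b = [[-16 * a ^ 2, 0, 0, 24 * b, 8 * a, 0], [54 * b, 0, 0, 5 * a, 0, -3], [32 * a, 6, 0, 0, 0, 0]]"

definition sd_cofactors_1 :: "int \<Rightarrow> int \<Rightarrow> int list list" where
  "sd_cofactors_1 a b =
     [[0, 216 * b ^ 2 + 32 * a ^ 3, 0, 0, 96 * b ^ 2, 128 * a * b],
      [0, -64 * a * b, 96 * b, 16 * a ^ 3, 0, 16 * a ^ 2],
      [0, -32 * a ^ 2, 0, -64 * a * b, 0, -192 * b]]"

definition sd_cofactors_2 :: "int \<Rightarrow> int \<Rightarrow> int list list" where
  "sd_cofactors_2 a b =
     [[0, 0, -108 * a * b ^ 2 - 16 * a ^ 4, -16 * a * b ^ 3 - 2 * a ^ 4 * b, 56 * a ^ 2 * b ^ 2 + 8 * a ^ 5,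
       -192 * b ^ 3 - 26 * a ^ 3 * b],
      [0, 96 * b ^ 3 + 13 * a ^ 3 * b, 2 * a ^ 2 * b, -24 * a ^ 2 * b ^ 2 - 3 * a ^ 5, 0, 32 * a * b ^ 2 + 5 * a ^ 4],
      [0, 44 * a * b ^ 2 + 6 * a ^ 4, 216 * b ^ 2 + 32 * a ^ 3, 96 * b ^ 3 + 12 * a ^ 3 * b, 0, -4 * a ^ 2 * b]]"

lemma sd_bezout_0:
  "lincomb (map (\<lambda>c. lincomb c (quadratic_monomials t0 t1 t2)) (sd_cofactors_0 a b)) (sd_forms a b t0 t1 t2)
     = 8 * (4 * a ^ 3 + 27 * b ^ 2) * t0 ^ 4"
  by (simp add: sd_cofactors_0_def lincomb_def quadratic_monomials_def sd_forms_def) algebra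

lemma sd_bezout_1:
  "lincomb (map (\<lambda>c. lincomb c (quadratic_monomials t0 t1 t2)) (sd_cofactors_1 a b)) (sd_forms a b t0 t1 t2)
     = 8 * (4 * a ^ 3 + 27 * b ^ 2) * t1 ^ 4"
  by (simp add: sd_cofactors_1_def lincomb_def quadratic_monomials_def sd_forms_def) algebra

lemma sd_bezout_2:
  "lincomb (map (\<lambda>c. lincomb c (quadratic_monomials t0 t1 t2)) (sd_cofactors_2 a b)) (sd_forms a b t0 t1 t2)
     = 8 * (4 * a ^ 3 + 27 * b ^ 2) * t2 ^ 4"
  by (simp add: sd_cofactors_2_def lincomb_def quadratic_monomials_def sd_forms_def) algebra

lemma max_mult_max_le_coeffs:
  fixes m1 e1 m2 e2 :: int
  shows "max \<bar>m1\<bar> \<bar>e1\<bar> * max \<bar>m2\<bar> \<bar>e2\<bar> \<le> 2 * max \<bar>e1 * e2\<bar> (max \<bar>m1 * e2 + m2 * e1\<bar> \<bar>m1 * m2\<bar>)"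
proof -
  define C where "C = max \<bar>e1 * e2\<bar> (max \<bar>m1 * e2 + m2 * e1\<bar> \<bar>m1 * m2\<bar>)"
  have C: "\<bar>e1\<bar> * \<bar>e2\<bar> \<le> C" "\<bar>m1 * e2 + m2 * e1\<bar> \<le> C" "\<bar>m1\<bar> * \<bar>m2\<bar> \<le> C"
    and "0 \<le> C" unfolding C_def by (auto simp: abs_mult le_max_iff_disj)
  have t: "\<bar>m1\<bar> * \<bar>e2\<bar> \<le> C + \<bar>m2\<bar> * \<bar>e1\<bar>" "\<bar>m2\<bar> * \<bar>e1\<bar> \<le> C + \<bar>m1\<bar> * \<bar>e2\<bar>"
    using C(2) abs_triangle_ineq[of "m1 * e2 + m2 * e1" "- (m2 * e1)"]
      abs_triangle_ineq[of "m1 * e2 + m2 * e1" "- (m1 * e2)"] by (simp_all add: abs_mult)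
  consider "\<bar>e1\<bar> \<le> \<bar>m1\<bar>" "\<bar>e2\<bar> \<le> \<bar>m2\<bar>" | "\<bar>m1\<bar> \<le> \<bar>e1\<bar>" "\<bar>m2\<bar> \<le> \<bar>e2\<bar>"
    | "\<bar>e1\<bar> \<le> \<bar>m1\<bar>" "\<bar>m2\<bar> \<le> \<bar>e2\<bar>" | "\<bar>m1\<bar> \<le> \<bar>e1\<bar>" "\<bar>e2\<bar> \<le> \<bar>m2\<bar>" by linarith
  then have "max \<bar>m1\<bar> \<bar>e1\<bar> * max \<bar>m2\<bar> \<bar>e2\<bar> \<le> 2 * C"
  proof cases
    case 3
    then have "\<bar>m2\<bar> * \<bar>e1\<bar> \<le> \<bar>m1\<bar> * \<bar>m2\<bar>" by (metis abs_ge_zero mult.commute mult_left_mono)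
    with 3 show ?thesis using C t by (simp add: max_def)
  next
    case 4
    then have "\<bar>m1\<bar> * \<bar>e2\<bar> \<le> \<bar>m1\<bar> * \<bar>m2\<bar>" by (simp add: mult_left_mono)
    with 4 show ?thesis using C t by (simp add: max_def mult.commute)
  qed (use C \<open>0 \<le> C\<close> in \<open>simp_all add: max_def\<close>)
  then show ?thesis unfolding C_def .
qed

lemma coeffs_le_max_mult_max:
  fixes m1 e1 m2 e2 :: int
  shows "max \<bar>e1 * e2\<bar> (max \<bar>m1 * e2 + m2 * e1\<bar> \<bar>m1 * m2\<bar>) \<le> 2 * (max \<bar>m1\<bar> \<bar>e1\<bar> * max \<bar>m2\<bar> \<bar>e2\<bar>)"
proof -
  have le: "\<bar>x * y\<bar> \<le> max \<bar>m1\<bar> \<bar>e1\<bar> * max \<bar>m2\<bar> \<bar>e2\<bar>"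
    if "\<bar>x\<bar> \<le> max \<bar>m1\<bar> \<bar>e1\<bar>" "\<bar>y\<bar> \<le> max \<bar>m2\<bar> \<bar>e2\<bar>" for x y
    unfolding abs_mult using that by (intro mult_mono) (auto simp: le_max_iff_disj)
  have "\<bar>m1 * e2 + m2 * e1\<bar> \<le> \<bar>m1 * e2\<bar> + \<bar>e1 * m2\<bar>" by (simp add: abs_triangle_ineq mult.commute)
  then show ?thesis using le[of m1 e2] le[of e1 m2] le[of e1 e2] le[of m1 m2] abs_ge_zero[of "e1 * e2"]
    by (intro max.boundedI; simp add: le_max_iff_disj; linarith)
qed

lemma sd_forms_multiple:
  fixes x1 y1 x2 y2 :: rat
  assumes c1: "y1 ^ 2 = x1 ^ 3 + of_int a * x1 + of_int b" and c2: "y2 ^ 2 = x2 ^ 3 + of_int a * x2 + of_int b"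
    and ne: "x1 \<noteq> x2" and m1: "of_int m1 = x1 * of_int e1" and m2: "of_int m2 = x2 * of_int e2"
    and p3: "of_int p3 = x_coord (ec_add a b (Pt x2 y2) (Pt x1 y1)) * of_int q3"
    and p4: "of_int p4 = x_coord (ec_add a b (Pt x1 y1) (Pt x2 (- y2))) * of_int q4"
    and cop: "coprime p3 q3" "coprime p4 q4" and q: "q3 \<noteq> 0" "q4 \<noteq> 0"
  obtains k where "sd_forms a b (e1 * e2) (m1 * e2 + m2 * e1) (m1 * m2)
    = [k * (q3 * q4), k * (p3 * q4 + p4 * q3), k * (p3 * p4)]"
proof -
  define x3 where "x3 = x_coord (ec_add a b (Pt x2 y2) (Pt x1 y1))"
  define x4 where "x4 = x_coord (ec_add a b (Pt x1 y1) (Pt x2 (- y2)))"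
  define E :: rat where "E = (of_int e1 * of_int e2 * (x1 - x2)) ^ 2"
  obtain W0 W1 W2 where W: "sd_forms a b (e1 * e2) (m1 * e2 + m2 * e1) (m1 * m2) = [W0, W1, W2]"
    by (simp add: sd_forms_def)
  have Wdef: "W0 = (m1 * e2 + m2 * e1) ^ 2 - 4 * (e1 * e2) * (m1 * m2)"
    "W1 = 2 * (m1 * m2 + a * (e1 * e2)) * (m1 * e2 + m2 * e1) + 4 * b * (e1 * e2) ^ 2"
    "W2 = (m1 * m2 - a * (e1 * e2)) ^ 2 - 4 * b * (e1 * e2) * (m1 * e2 + m2 * e1)"
    using W by (simp_all add: sd_forms_def)
  have S: "(x3 + x4) * (x1 - x2) ^ 2 = 2 * (x1 * x2 + of_int a) * (x1 + x2) + 4 * of_int b"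
    "x3 * x4 * (x1 - x2) ^ 2 = (x1 * x2 - of_int a) ^ 2 - 4 * of_int b * (x1 + x2)"
    using x_coord_add_sub[OF c1 c2 ne] unfolding x3_def x4_def by simp_all
  have "of_int W0 = (of_int e1 * of_int e2) ^ 2 * (x1 - x2) ^ 2"
    unfolding Wdef by (simp add: m1 m2 power2_eq_square algebra_simps)
  moreover have "of_int W1 = (of_int e1 * of_int e2) ^ 2 * ((x3 + x4) * (x1 - x2) ^ 2)"
    unfolding Wdef S by (simp add: m1 m2 power2_eq_square algebra_simps)
  moreover have "of_int W2 = (of_int e1 * of_int e2) ^ 2 * (x3 * x4 * (x1 - x2) ^ 2)"
    unfolding Wdef S by (simp add: m1 m2 power2_eq_square algebra_simps)
  ultimately have WE: "of_int W0 = E" "of_int W1 = E * (x3 + x4)" "of_int W2 = E * (x3 * x4)"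
    unfolding E_def by (simp_all add: power_mult_distrib)
  have "rat_of_int ((p3 * q4 + p4 * q3) * W0) = of_int (W1 * (q3 * q4))"
    "rat_of_int (p3 * p4 * W0) = of_int (W2 * (q3 * q4))"
    using WE p3 p4 unfolding x3_def[symmetric] x4_def[symmetric] by (simp_all add: algebra_simps)
  then have "(p3 * q4 + p4 * q3) * W0 = W1 * (q3 * q4)" "p3 * p4 * W0 = W2 * (q3 * q4)"
    by (simp_all only: of_int_eq_iff)
  moreover have "q3 * q4 \<noteq> 0" using q by simp
  ultimately obtain k where "W0 = k * (q3 * q4)" "W1 = k * (p3 * q4 + p4 * q3)" "W2 = k * (p3 * p4)"
    using proportional_to_primitive[OF gcd3_product_coeffs_eq_1[OF cop]] by metis
  with W show thesis by (intro that[of k]) simp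
qed

definition sd_cofactor_norm :: "int \<Rightarrow> int \<Rightarrow> int" where
  "sd_cofactor_norm a b = sum_list (map coeff_sum (sd_cofactors_0 a b @ sd_cofactors_1 a b @ sd_cofactors_2 a b))"

lemma sd_common_divisor_dvd:
  assumes "gcd t0 (gcd t1 t2) = 1" "\<forall>W\<in>set (sd_forms a b t0 t1 t2). k dvd W"
  shows "k dvd 8 * (4 * a ^ 3 + 27 * b ^ 2)"
proof -
  let ?bez = "\<lambda>Cs. lincomb (map (\<lambda>c. lincomb c (quadratic_monomials t0 t1 t2)) Cs) (sd_forms a b t0 t1 t2)"
  have "k dvd ?bez (sd_cofactors_0 a b)" "k dvd ?bez (sd_cofactors_1 a b)" "k dvd ?bez (sd_cofactors_2 a b)"
    using dvd_lincomb[OF assms(2)] by blast+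
  then show ?thesis unfolding sd_bezout_0 sd_bezout_1 sd_bezout_2 by (rule dvd_of_dvd_mult_gcd3_powers[OF assms(1)])
qed

lemma sd_forms_lower_bound:
  assumes "\<forall>W\<in>set (sd_forms a b t0 t1 t2). \<bar>W\<bar> \<le> B"
  shows "\<bar>8 * (4 * a ^ 3 + 27 * b ^ 2)\<bar> * max \<bar>t0\<bar> (max \<bar>t1\<bar> \<bar>t2\<bar>) ^ 4
    \<le> sd_cofactor_norm a b * max \<bar>t0\<bar> (max \<bar>t1\<bar> \<bar>t2\<bar>) ^ 2 * B"
proof -
  define T where "T = max \<bar>t0\<bar> (max \<bar>t1\<bar> \<bar>t2\<bar>)"
  have tT: "\<bar>t0\<bar> \<le> T" "\<bar>t1\<bar> \<le> T" "\<bar>t2\<bar> \<le> T" unfolding T_def by auto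
  have B: "0 \<le> T ^ 2" "0 \<le> B" using assms by (simp_all add: sd_forms_def, linarith)
  let ?bez = "\<lambda>Cs. lincomb (map (\<lambda>c. lincomb c (quadratic_monomials t0 t1 t2)) Cs) (sd_forms a b t0 t1 t2)"
  have bez: "\<bar>?bez Cs\<bar> \<le> sd_cofactor_norm a b * T ^ 2 * B"
    if "Cs \<in> {sd_cofactors_0 a b, sd_cofactors_1 a b, sd_cofactors_2 a b}" for Cs
  proof -
    have "sum_list (map coeff_sum Cs) \<le> sd_cofactor_norm a b"
      using that sum_list_coeff_sum_nonneg unfolding sd_cofactor_norm_def by auto
    then show ?thesis using abs_lincomb_lincomb_le[OF quadratic_monomials_le[OF tT] B(1) assms B(2), where Cs = Cs] B
      by (meson mult_right_mono order_trans)
  qed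
  have "\<bar>8 * (4 * a ^ 3 + 27 * b ^ 2) * t0 ^ 4\<bar> \<le> sd_cofactor_norm a b * T ^ 2 * B"
    "\<bar>8 * (4 * a ^ 3 + 27 * b ^ 2) * t1 ^ 4\<bar> \<le> sd_cofactor_norm a b * T ^ 2 * B"
    "\<bar>8 * (4 * a ^ 3 + 27 * b ^ 2) * t2 ^ 4\<bar> \<le> sd_cofactor_norm a b * T ^ 2 * B"
    using bez[of "sd_cofactors_0 a b"] bez[of "sd_cofactors_1 a b"] bez[of "sd_cofactors_2 a b"]
    unfolding sd_bezout_0 sd_bezout_1 sd_bezout_2 by simp_all
  moreover have "T = \<bar>t0\<bar> \<or> T = \<bar>t1\<bar> \<or> T = \<bar>t2\<bar>" unfolding T_def by linarith
  ultimately show ?thesis unfolding T_def[symmetric] by (auto simp: abs_mult power_abs)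
qed

lemma sum_diff_height_bound:
  fixes x1 y1 x2 y2 :: rat
  assumes ell: "elliptic a b"
    and c1: "y1 ^ 2 = x1 ^ 3 + of_int a * x1 + of_int b" and c2: "y2 ^ 2 = x2 ^ 3 + of_int a * x2 + of_int b"
    and ne: "x1 \<noteq> x2"
  shows "naive_height x1 ^ 2 * naive_height x2 ^ 2
    \<le> 8 * sd_cofactor_norm a b * naive_height (x_coord (ec_add a b (Pt x2 y2) (Pt x1 y1)))
        * naive_height (x_coord (ec_add a b (Pt x1 y1) (Pt x2 (- y2))))"
proof -
  define x3 where "x3 = x_coord (ec_add a b (Pt x2 y2) (Pt x1 y1))"
  define x4 where "x4 = x_coord (ec_add a b (Pt x1 y1) (Pt x2 (- y2)))"
  obtain m1 e1 where "e1 > 0" "coprime m1 e1" "of_int m1 = x1 * of_int e1"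
    and h1: "naive_height x1 = max \<bar>m1\<bar> \<bar>e1\<bar>" by (rule quotient_of_naive_height)
  obtain m2 e2 where "e2 > 0" "coprime m2 e2" "of_int m2 = x2 * of_int e2"
    and h2: "naive_height x2 = max \<bar>m2\<bar> \<bar>e2\<bar>" by (rule quotient_of_naive_height)
  obtain p3 q3 where "q3 > 0" "coprime p3 q3" "of_int p3 = x3 * of_int q3"
    and h3: "naive_height x3 = max \<bar>p3\<bar> \<bar>q3\<bar>" by (rule quotient_of_naive_height)
  obtain p4 q4 where "q4 > 0" "coprime p4 q4" "of_int p4 = x4 * of_int q4"
    and h4: "naive_height x4 = max \<bar>p4\<bar> \<bar>q4\<bar>" by (rule quotient_of_naive_height)
  define D where "D = 8 * (4 * a ^ 3 + 27 * b ^ 2)"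
  have "D \<noteq> 0" using ell unfolding D_def elliptic_def by simp
  define T where "T = max \<bar>e1 * e2\<bar> (max \<bar>m1 * e2 + m2 * e1\<bar> \<bar>m1 * m2\<bar>)"
  define H where "H = naive_height x3 * naive_height x4"
  obtain k where Wk: "sd_forms a b (e1 * e2) (m1 * e2 + m2 * e1) (m1 * m2)
      = [k * (q3 * q4), k * (p3 * q4 + p4 * q3), k * (p3 * p4)]"
    using sd_forms_multiple[OF c1 c2 ne] \<open>q3 > 0\<close> \<open>q4 > 0\<close> \<open>coprime p3 q3\<close> \<open>coprime p4 q4\<close>
      \<open>of_int m1 = x1 * of_int e1\<close> \<open>of_int m2 = x2 * of_int e2\<close>
      \<open>of_int p3 = x3 * of_int q3\<close> \<open>of_int p4 = x4 * of_int q4\<close>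
    unfolding x3_def x4_def by (metis less_irrefl)
  have "k dvd D" unfolding D_def
    using sd_common_divisor_dvd[OF gcd3_product_coeffs_eq_1[OF \<open>coprime m1 e1\<close> \<open>coprime m2 e2\<close>]] Wk by simp
  then have "\<bar>k\<bar> \<le> \<bar>D\<bar>" using \<open>D \<noteq> 0\<close> by (simp add: dvd_imp_le_int)
  moreover have "max \<bar>q3 * q4\<bar> (max \<bar>p3 * q4 + p4 * q3\<bar> \<bar>p3 * p4\<bar>) \<le> 2 * H"
    using coeffs_le_max_mult_max[of q3 q4 p3 p4] unfolding H_def h3 h4 .
  ultimately have "\<forall>W\<in>set (sd_forms a b (e1 * e2) (m1 * e2 + m2 * e1) (m1 * m2)). \<bar>W\<bar> \<le> \<bar>D\<bar> * (2 * H)"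
    unfolding Wk by (auto simp: abs_mult intro: mult_mono)
  from sd_forms_lower_bound[OF this]
  have "(\<bar>D\<bar> * T ^ 2) * T ^ 2 \<le> (\<bar>D\<bar> * T ^ 2) * (2 * sd_cofactor_norm a b * H)"
    unfolding T_def[symmetric] D_def[symmetric] by (simp add: algebra_simps flip: power_add)
  moreover have "1 \<le> e1 * e2" using mult_pos_pos[OF \<open>e1 > 0\<close> \<open>e2 > 0\<close>] by linarith
  then have "0 < \<bar>D\<bar> * T ^ 2" using \<open>D \<noteq> 0\<close> unfolding T_def by (simp add: le_max_iff_disj)
  ultimately have "T ^ 2 \<le> 2 * sd_cofactor_norm a b * H" by (simp only: mult_le_cancel_left_pos)
  moreover have "naive_height x1 * naive_height x2 \<le> 2 * T"
    using max_mult_max_le_coeffs[of m1 e1 m2 e2] unfolding h1 h2 T_def .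
  then have "(naive_height x1 * naive_height x2) ^ 2 \<le> (2 * T) ^ 2"
    using naive_height_ge_1[of x1] naive_height_ge_1[of x2] by (intro power_mono) auto
  ultimately show ?thesis unfolding H_def x3_def x4_def by (simp add: power_mult_distrib algebra_simps)
qed

lemma on_curve_ec_add:
  assumes "on_curve a b P" "on_curve a b Q"
  shows "on_curve a b (ec_add a b P Q)"
proof (cases P)
  case (Pt x1 y1)
  show ?thesis
  proof (cases Q)
    case (Pt x2 y2)
    have c1: "y1 ^ 2 = x1 ^ 3 + of_int a * x1 + of_int b" and c2: "y2 ^ 2 = x2 ^ 3 + of_int a * x2 + of_int b"
      using assms \<open>P = Pt x1 y1\<close> Pt by (simp_all add: on_curve_def)
    have "x1 = x2 \<Longrightarrow> y2 = y1 \<or> y2 = - y1" using c1 c2 by (simp flip: power2_eq_iff)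
    then consider "x1 = x2" "y1 = - y2" | "x1 = x2" "y2 = y1" "y1 \<noteq> 0" | "x1 \<noteq> x2" by fastforce
    then show ?thesis
    proof cases
      case 2
      define l where "l = (3 * x1 ^ 2 + of_int a) / (2 * y1)"
      have "l * (2 * y1) = 3 * x1 ^ 2 + of_int a" unfolding l_def using 2 by simp
      then have "(l * (x1 - (l ^ 2 - x1 - x1)) - y1) ^ 2
          = (l ^ 2 - x1 - x1) ^ 3 + of_int a * (l ^ 2 - x1 - x1) + of_int b"
        using c1 by algebra
      then show ?thesis using 2 \<open>P = Pt x1 y1\<close> Pt unfolding l_def by (simp add: on_curve_def Let_def)
    next
      case 3
      define l where "l = (y2 - y1) / (x2 - x1)"
      have "l * (x2 - x1) = y2 - y1" unfolding l_def using 3 by simp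
      then have "(l * (x1 - (l ^ 2 - x1 - x2)) - y1) ^ 2
          = (l ^ 2 - x1 - x2) ^ 3 + of_int a * (l ^ 2 - x1 - x2) + of_int b"
        using c1 c2 3 by algebra
      then show ?thesis using 3 \<open>P = Pt x1 y1\<close> Pt unfolding l_def by (simp add: on_curve_def Let_def)
    qed (use \<open>P = Pt x1 y1\<close> Pt in \<open>simp add: on_curve_def\<close>)
  qed (use assms Pt in simp)
qed (use assms in simp)

lemma on_curve_ec_nmul: "on_curve a b P \<Longrightarrow> on_curve a b (ec_nmul a b k P)"
  by (induction k) (simp_all add: on_curve_ec_add on_curve_def[where P = Inf])

lemma ec_nmul_mod:
  assumes "ec_nmul a b k P = Inf"
  shows "ec_nmul a b j P = ec_nmul a b (j mod k) P"
proof (induction j)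
  case (Suc j)
  then have "ec_nmul a b (Suc j) P = ec_nmul a b (Suc (j mod k)) P" by simp
  also have "\<dots> = ec_nmul a b (Suc j mod k) P"
    using assms by (cases "Suc (j mod k) = k") (simp_all add: mod_Suc del: ec_nmul.simps(2))
  finally show ?case .
qed simp

lemma ec_add_neg_cancel:
  assumes cP: "on_curve a b (Pt p q)" and cR: "on_curve a b R"
    and sum: "ec_add a b (Pt p q) R = Pt x3 y3" and ne: "x3 \<noteq> p"
  shows "ec_add a b (Pt x3 y3) (Pt p (- q)) = R"
proof (cases R)
  case Inf
  then show ?thesis using sum ne by simp
next
  case (Pt r s)
  have c1: "q ^ 2 = p ^ 3 + of_int a * p + of_int b" and c2: "s ^ 2 = r ^ 3 + of_int a * r + of_int b"
    using cP cR Pt by (simp_all add: on_curve_def)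
  have nt: "\<not> (p = r \<and> q = - s)" using sum Pt by auto
  define l' where "l' = (- q - y3) / (p - x3)"
  have res: "ec_add a b (Pt x3 y3) (Pt p (- q)) = Pt (l' ^ 2 - x3 - p) (l' * (x3 - (l' ^ 2 - x3 - p)) - y3)"
    using ne unfolding l'_def by (simp add: Let_def)
  obtain l where x3: "x3 = l ^ 2 - p - r" and y3: "y3 = l * (p - x3) - q"
    and l: "p = r \<and> s = q \<and> q \<noteq> 0 \<and> l * (2 * q) = 3 * p ^ 2 + of_int a \<or> p \<noteq> r \<and> l * (r - p) = s - q"
  proof (cases "p = r")
    case True
    then have "s = q \<or> s = - q" using c1 c2 by (simp flip: power2_eq_iff)
    then have "s = q" "q \<noteq> 0" using nt True by auto
    with True sum Pt show thesis by (intro that[of "(3 * p ^ 2 + of_int a) / (2 * q)"]) (auto simp: Let_def)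
  next
    case False
    with sum Pt show thesis by (intro that[of "(s - q) / (r - p)"]) (auto simp: Let_def)
  qed
  have "l' = - l" unfolding l'_def y3 using ne by (simp add: field_simps)
  then have "l' ^ 2 - x3 - p = r" "l' * (x3 - (l' ^ 2 - x3 - p)) - y3 = s"
    using l c1 c2 unfolding x3 y3 by (auto simp: algebra_simps power2_eq_square)
  then show ?thesis unfolding res Pt by simp
qed

section \<open>Torsion points have bounded x-coordinate\<close>

lemma ec_nmul_max_height:
  assumes "ec_nmul a b k P = Inf" "k > 0"
  obtains j where "\<And>i. naive_height (x_coord (ec_nmul a b i P)) \<le> naive_height (x_coord (ec_nmul a b j P))"
proof -
  define h where "h i = naive_height (x_coord (ec_nmul a b i P))" for i
  have "h ` {..<k} \<noteq> {}" using assms(2) by blast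
  then obtain j where "Max (h ` {..<k}) = h j" using Max_in[of "h ` {..<k}"] by blast
  moreover have "h i \<in> h ` {..<k}" for i
    using ec_nmul_mod[OF assms(1), of i] assms(2) unfolding h_def by simp
  ultimately show thesis using that[of j] unfolding h_def[symmetric] by (metis Max_ge finite_imageI finite_lessThan)
qed

lemma dbl_cofactor_norm_nonneg: "dbl_cofactor_norm a b \<ge> 0"
  unfolding dbl_cofactor_norm_def by (rule sum_list_coeff_sum_nonneg)

lemma sd_cofactor_norm_nonneg: "sd_cofactor_norm a b \<ge> 0"
  unfolding sd_cofactor_norm_def by (rule sum_list_coeff_sum_nonneg)

lemma naive_height_le_of_double:
  fixes A B :: rat
  assumes ell: "elliptic a b" and B: "B \<noteq> 0" and cA: "B ^ 2 = A ^ 3 + of_int a * A + of_int b"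
    and le: "naive_height (x_coord (ec_add a b (Pt A B) (Pt A B))) \<le> naive_height A"
  shows "naive_height A \<le> dbl_cofactor_norm a b"
proof -
  have "naive_height A ^ 4 \<le> dbl_cofactor_norm a b * naive_height A"
    using double_height_bound[OF ell B cA] mult_left_mono[OF le dbl_cofactor_norm_nonneg] by (rule order_trans)
  then have "naive_height A * naive_height A ^ 3 \<le> naive_height A * dbl_cofactor_norm a b"
    by (simp add: eval_nat_numeral mult.commute)
  then have "naive_height A ^ 3 \<le> dbl_cofactor_norm a b" using naive_height_ge_1[of A] by simp
  moreover have "naive_height A \<le> naive_height A ^ 3"
    using naive_height_ge_1[of A] power_increasing[of 1 3] by fastforce
  ultimately show ?thesis by simp
qed

lemma naive_height_le_of_sum_diff:
  fixes A B x y :: rat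
  assumes ell: "elliptic a b" and cA: "B ^ 2 = A ^ 3 + of_int a * A + of_int b"
    and c: "y ^ 2 = x ^ 3 + of_int a * x + of_int b" and "x \<noteq> A"
    and le: "naive_height (x_coord (ec_add a b (Pt A B) (Pt x y))) \<le> naive_height x"
      "naive_height (x_coord (ec_add a b (Pt x y) (Pt A (- B)))) \<le> naive_height x"
  shows "naive_height A \<le> 8 * sd_cofactor_norm a b"
proof -
  define h3 where "h3 = naive_height (x_coord (ec_add a b (Pt A B) (Pt x y)))"
  define h4 where "h4 = naive_height (x_coord (ec_add a b (Pt x y) (Pt A (- B))))"
  have "h3 * h4 \<le> naive_height x * naive_height x"
    using le naive_height_ge_1 unfolding h3_def h4_def by (intro mult_mono) (auto intro: order_trans[OF zero_le_one])
  then have "8 * sd_cofactor_norm a b * h3 * h4 \<le> naive_height x ^ 2 * (8 * sd_cofactor_norm a b)"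
    using mult_left_mono[OF _ sd_cofactor_norm_nonneg, of "h3 * h4" "naive_height x * naive_height x" a b]
    by (simp add: power2_eq_square algebra_simps)
  then have "naive_height x ^ 2 * naive_height A ^ 2 \<le> naive_height x ^ 2 * (8 * sd_cofactor_norm a b)"
    using sum_diff_height_bound[OF ell c cA \<open>x \<noteq> A\<close>] unfolding h3_def h4_def by linarith
  then have "naive_height A ^ 2 \<le> 8 * sd_cofactor_norm a b" using naive_height_ge_1[of x] by simp
  moreover have "naive_height A \<le> naive_height A ^ 2" using naive_height_ge_1[of A] by (simp add: power2_eq_square)
  ultimately show ?thesis by simp
qed

(* Let Q = j P have the largest height in the finite orbit of P.  If x(Q) = x(P), duplication bounds
   H(x(P)); otherwise P + Q = (j + 1) P and Q - P = (j - 1) P do.  Only translations by P occur. *)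
lemma torsion_naive_height_le:
  assumes ell: "elliptic a b" and tor: "torsion a b (Pt A B)" and B: "B \<noteq> 0"
  shows "naive_height A \<le> max (dbl_cofactor_norm a b) (8 * sd_cofactor_norm a b)"
proof -
  define P where "P = Pt A B"
  have cP: "on_curve a b P" and cA: "B ^ 2 = A ^ 3 + of_int a * A + of_int b"
    using tor unfolding torsion_def P_def on_curve_def by simp_all
  obtain k where "k > 0" "ec_nmul a b k P = Inf" using tor unfolding torsion_def P_def by blast
  define h where "h i = naive_height (x_coord (ec_nmul a b i P))" for i
  obtain j where hj: "\<And>i. h i \<le> h j"
    using ec_nmul_max_height[OF \<open>ec_nmul a b k P = Inf\<close> \<open>k > 0\<close>] unfolding h_def by blast
  have HA: "h 1 = naive_height A" unfolding h_def P_def by simp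
  consider "h j = naive_height A" | "h j > naive_height A" using hj[of 1] HA by linarith
  then show ?thesis
  proof cases
    case 1
    have N2: "ec_nmul a b 2 P = ec_add a b (Pt A B) (Pt A B)"
      by (simp add: P_def numeral_2_eq_2 del: ec_add.simps(3))
    have "naive_height (x_coord (ec_add a b (Pt A B) (Pt A B))) \<le> naive_height A"
      using hj[of 2] unfolding 1 unfolding h_def N2 .
    then have "naive_height A \<le> dbl_cofactor_norm a b" by (rule naive_height_le_of_double[OF ell B cA])
    then show ?thesis by simp
  next
    case 2
    obtain x y where Q: "ec_nmul a b j P = Pt x y"
      using 2 naive_height_ge_1[of A] unfolding h_def by (cases "ec_nmul a b j P") auto
    have hQ: "h j = naive_height x" unfolding h_def Q by simp
    with 2 have "x \<noteq> A" by auto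
    obtain i where j: "j = Suc i" using Q by (cases j) auto
    have c: "y ^ 2 = x ^ 3 + of_int a * x + of_int b"
      using on_curve_ec_nmul[OF cP, of j] unfolding Q on_curve_def by simp
    have "ec_add a b (Pt A B) (ec_nmul a b i P) = Pt x y" using Q unfolding j P_def by simp
    then have QP: "ec_add a b (Pt x y) (Pt A (- B)) = ec_nmul a b i P"
      using ec_add_neg_cancel on_curve_ec_nmul[OF cP] cP \<open>x \<noteq> A\<close> unfolding P_def by blast
    have PQ: "ec_add a b (Pt A B) (Pt x y) = ec_nmul a b (Suc j) P" using Q unfolding P_def by simp
    have "naive_height (x_coord (ec_add a b (Pt A B) (Pt x y))) \<le> naive_height x"
      using hj[of "Suc j"] unfolding hQ unfolding h_def PQ .
    moreover have "naive_height (x_coord (ec_add a b (Pt x y) (Pt A (- B)))) \<le> naive_height x"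
      using hj[of i] unfolding hQ unfolding h_def QP .
    ultimately have "naive_height A \<le> 8 * sd_cofactor_norm a b"
      by (rule naive_height_le_of_sum_diff[OF ell cA c \<open>x \<noteq> A\<close>])
    then show ?thesis by simp
  qed
qed

lemma cubic_root_le:
  fixes x a b :: real
  assumes "x ^ 3 + a * x + b = 0"
  shows "x \<le> 1 + \<bar>a\<bar> + \<bar>b\<bar>"
proof (rule ccontr)
  assume "\<not> ?thesis"
  then have big: "x > 1 + \<bar>a\<bar> + \<bar>b\<bar>" by simp
  then have x1: "x > 1" by (smt (verit) abs_ge_zero)
  have "x * x ^ 2 = - a * x - b" using assms by (simp add: power3_eq_cube power2_eq_square algebra_simps)
  also have "\<dots> \<le> \<bar>a\<bar> * x + \<bar>b\<bar> * x"
  proof -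
    have "- a * x \<le> \<bar>a\<bar> * x" using x1 by (intro mult_right_mono) auto
    moreover have "\<bar>b\<bar> \<le> \<bar>b\<bar> * x" using x1 by (simp add: mult_le_cancel_left1)
    ultimately show ?thesis by linarith
  qed
  finally have "x * x ^ 2 \<le> x * (\<bar>a\<bar> + \<bar>b\<bar>)" by (simp add: algebra_simps)
  then have "x ^ 2 \<le> \<bar>a\<bar> + \<bar>b\<bar>" using x1 by simp
  moreover have "x < x ^ 2" using x1 by (simp add: power2_eq_square)
  ultimately show False using big by simp
qed

lemma torsion_x_le:
  assumes "elliptic a b" "torsion a b (Pt A B)"
  shows "real_of_rat A \<le> max (1 + \<bar>a\<bar> + \<bar>b\<bar>) (max (dbl_cofactor_norm a b) (8 * sd_cofactor_norm a b))"
proof (cases "B = 0")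
  case True
  then have "A ^ 3 + of_int a * A + of_int b = 0" using assms(2) by (simp add: torsion_def on_curve_def)
  then have "real_of_rat (A ^ 3 + of_int a * A + of_int b) = 0" by simp
  then have "real_of_rat A ^ 3 + of_int a * real_of_rat A + of_int b = 0"
    by (simp add: of_rat_add of_rat_mult of_rat_power)
  then show ?thesis using cubic_root_le by fastforce
next
  case False
  have "real_of_rat A \<le> naive_height A" using abs_le_naive_height[of A] by linarith
  also have "\<dots> \<le> max (dbl_cofactor_norm a b) (8 * sd_cofactor_norm a b)"
    using torsion_naive_height_le[OF assms False] by linarith
  finally show ?thesis by linarith
qed

section \<open>Suitability of pairs with large first coordinate\<close>

definition suitable :: "int \<Rightarrow> int \<Rightarrow> ecpt list \<Rightarrow> real \<Rightarrow> int \<Rightarrow> int \<Rightarrow> bool" where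
  "suitable a b Ps \<epsilon> u v \<longleftrightarrow> map_suitable a b u v \<and> kernel_suitable a b u v \<and> bound_suitable a b Ps \<epsilon> u v"

lemma lower_powr_bound:
  fixes U V G K \<alpha> :: real
  assumes \<alpha>: "1 < \<alpha>" "\<alpha> < 2" and K: "0 < K" and V: "0 < V" "V \<le> U"
    and UK: "2 * K < U powr (4 - 2 * \<alpha>)" and G: "U ^ 3 \<le> 2 * G"
  shows "(1/4 * (U * V + V ^ 2)) powr \<alpha> * K < V * G"
proof -
  have U: "0 < U" using V by simp
  have "1/4 * (U * V + V ^ 2) \<le> U * V"
    using V mult_right_mono[OF V(2), of V] by (simp add: power2_eq_square)
  then have "(1/4 * (U * V + V ^ 2)) powr \<alpha> \<le> (U * V) powr \<alpha>"
    using U V \<alpha> by (intro powr_mono2) auto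
  also have "\<dots> = U powr \<alpha> * (V powr (\<alpha> - 1) * V)"
    using U V powr_add[of V "\<alpha> - 1" 1] by (simp add: powr_mult)
  also have "\<dots> \<le> U powr \<alpha> * (U powr (\<alpha> - 1) * V)"
    using V \<alpha> by (intro mult_left_mono mult_right_mono powr_mono2) auto
  also have "\<dots> = U powr (2 * \<alpha> - 1) * V"
    using powr_add[of U \<alpha> "\<alpha> - 1"] by (simp add: mult.assoc)
  finally have "(1/4 * (U * V + V ^ 2)) powr \<alpha> * K \<le> U powr (2 * \<alpha> - 1) * V * K"
    using K by (simp add: mult_right_mono)
  also have "\<dots> < U powr (2 * \<alpha> - 1) * V * (U powr (4 - 2 * \<alpha>) / 2)"
    using UK U V by (intro mult_strict_left_mono) auto
  also have "\<dots> = V * (U powr 3 / 2)"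
    using powr_add[of U "2 * \<alpha> - 1" "4 - 2 * \<alpha>"] by (simp add: algebra_simps)
  also have "\<dots> \<le> V * G" using G U V by (simp add: powr_realpow)
  finally show ?thesis .
qed

lemma upper_powr_bound:
  fixes U V G \<epsilon> \<alpha> :: real
  assumes \<alpha>: "(1 - \<epsilon>) * \<alpha> = 1" "1 \<le> \<alpha>" and \<epsilon>: "0 \<le> \<epsilon>"
    and U: "1 \<le> U" and V: "2 * U powr (1 - \<epsilon>) \<le> V" and G: "G \<le> 2 * U ^ 3"
  shows "V * G < (V ^ 2 * (U * V + V ^ 2)) powr \<alpha>"
proof -
  define w where "w = 3 * \<alpha> - 1"
  have w: "2 \<le> w" "(1 - \<epsilon>) * w = 2 + \<epsilon>" unfolding w_def using \<alpha> by (simp_all add: algebra_simps)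
  have U0: "0 < U" and V0: "0 < V" using U V powr_gt_zero[of U "1 - \<epsilon>"] by linarith+
  have "2 powr w * U powr (2 + \<epsilon>) = (2 * U powr (1 - \<epsilon>)) powr w"
    using U0 w by (simp add: powr_mult powr_powr)
  also have "\<dots> \<le> V powr w" using V U0 w by (intro powr_mono2) auto
  finally have Vw: "2 powr w * U powr (2 + \<epsilon>) \<le> V powr w" .
  have "U ^ 3 = U powr 3" using U0 by (simp add: powr_realpow)
  also have "\<dots> \<le> U powr (\<alpha> + (2 + \<epsilon>))" using U \<alpha> \<epsilon> by (intro powr_mono) auto
  also have "\<dots> = U powr \<alpha> * U powr (2 + \<epsilon>)" by (rule powr_add)
  finally have "4 * U ^ 3 \<le> 4 * (U powr \<alpha> * U powr (2 + \<epsilon>))" by simp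
  also have "\<dots> \<le> 2 powr w * (U powr \<alpha> * U powr (2 + \<epsilon>))"
    using powr_mono[OF w(1), of 2] by (intro mult_right_mono) auto
  also have "\<dots> \<le> U powr \<alpha> * V powr w" using Vw by (simp add: mult_left_mono algebra_simps)
  finally have U3: "4 * U ^ 3 \<le> U powr \<alpha> * V powr w" .
  have "G < 4 * U ^ 3" using G U0 by (smt (verit) zero_less_power)
  then have "V * G < V * (4 * U ^ 3)" using V0 by simp
  also have "\<dots> \<le> V * (U powr \<alpha> * V powr w)" using U3 V0 by (simp add: mult_left_mono)
  also have "\<dots> = U powr \<alpha> * V powr (1 + w)" using V0 by (simp add: powr_add)
  also have "V powr (1 + w) = (V ^ 3) powr \<alpha>"
  proof -
    have "V ^ 3 = V powr 3" using V0 by (simp add: powr_realpow)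
    then show ?thesis by (simp add: powr_powr w_def)
  qed
  also have "U powr \<alpha> * (V ^ 3) powr \<alpha> = (U * V ^ 3) powr \<alpha>" using U0 V0 by (simp add: powr_mult)
  also have "\<dots> \<le> (V ^ 2 * (U * V + V ^ 2)) powr \<alpha>"
    using U0 V0 \<alpha> by (intro powr_mono2) (auto simp: algebra_simps power2_eq_square power3_eq_cube)
  finally show ?thesis .
qed

lemma abs_lower_terms_le:
  fixes U V A B n :: real
  assumes n: "2 + 2 * (\<bar>A\<bar> + \<bar>B\<bar>) \<le> n" and V: "1 \<le> V" and U: "n * V + 1 \<le> U"
  shows "2 * \<bar>A * U * V ^ 2 - B * V ^ 3\<bar> \<le> U ^ 3"
proof -
  have "1 * V \<le> n * V" using n V by (intro mult_right_mono) auto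
  then have UV: "V \<le> U" "0 \<le> n * V" using V U by linarith+
  have "\<bar>B * V ^ 3\<bar> \<le> \<bar>B\<bar> * (U * V ^ 2)"
    using UV V by (simp add: abs_mult power3_eq_cube power2_eq_square mult_left_mono mult_right_mono)
  then have "2 * \<bar>A * U * V ^ 2 - B * V ^ 3\<bar> \<le> (2 * (\<bar>A\<bar> + \<bar>B\<bar>) * V ^ 2) * U"
    using abs_triangle_ineq4[of "A * U * V ^ 2" "B * V ^ 3"] UV V by (simp add: abs_mult algebra_simps)
  also have "\<dots> \<le> U ^ 2 * U"
  proof -
    have "2 * (\<bar>A\<bar> + \<bar>B\<bar>) * V ^ 2 \<le> n * V * V"
      using n V by (simp add: power2_eq_square mult_right_mono)
    also have "\<dots> \<le> (n * V) * (n * V)" using n V UV by (intro mult_left_mono) auto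
    also have "\<dots> \<le> U ^ 2" using U UV by (simp add: power2_eq_square mult_mono)
    finally show ?thesis using UV V by (simp add: mult_right_mono)
  qed
  finally show ?thesis by (simp add: power3_eq_cube power2_eq_square)
qed

lemma dE_bounds:
  fixes a b u v :: int and n :: real
  assumes n: "real_of_int (2 + 2 * (\<bar>a\<bar> + \<bar>b\<bar>)) \<le> n" and v: "1 \<le> v" and u: "n * of_int v + 1 \<le> of_int u"
  shows "of_int v * of_int u ^ 3 \<le> 2 * real_of_int (dE a b u v)"
    and "2 * real_of_int (dE a b u v) \<le> 3 * of_int v * of_int u ^ 3"
proof -
  define t :: real where "t = of_int a * of_int u * of_int v ^ 2 - of_int b * of_int v ^ 3"
  have "2 * \<bar>t\<bar> \<le> of_int u ^ 3"
    using abs_lower_terms_le[of "of_int a" "of_int b" n "of_int v" "of_int u"] n v u unfolding t_def by simp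
  then have "of_int v * of_int u ^ 3 \<le> of_int v * (2 * of_int u ^ 3 + 2 * t)"
    and "of_int v * (2 * of_int u ^ 3 + 2 * t) \<le> of_int v * (3 * of_int u ^ 3)"
    using v by (intro mult_left_mono; simp add: abs_le_iff)+
  moreover have "2 * real_of_int (dE a b u v) = of_int v * (2 * of_int u ^ 3 + 2 * t)"
    unfolding t_def by (simp add: dE_def algebra_simps)
  ultimately show "of_int v * of_int u ^ 3 \<le> 2 * real_of_int (dE a b u v)"
    and "2 * real_of_int (dE a b u v) \<le> 3 * of_int v * of_int u ^ 3" by simp_all
qed

lemma map_suitable_large:
  fixes a b u v :: int and n :: real
  assumes n: "real_of_int (2 + 2 * (\<bar>a\<bar> + \<bar>b\<bar>)) \<le> n" and v: "1 \<le> v" and u: "n * of_int v + 1 \<le> of_int u"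
  shows "map_suitable a b u v"
proof -
  have an: "\<bar>real_of_int a\<bar> \<le> n * n"
  proof -
    have "\<bar>real_of_int a\<bar> + 1 \<le> n" using n abs_ge_zero[of "real_of_int b"] by simp
    moreover have "1 * n \<le> n * n" using calculation by (intro mult_right_mono) auto
    ultimately show ?thesis by linarith
  qed
  have "1 * of_int v \<le> n * real_of_int v" using n v by (intro mult_right_mono) auto
  then have nv: "0 \<le> n * of_int v" "n * of_int v < of_int u" and "0 < u" using v u by linarith+
  have "\<bar>of_int a\<bar> * of_int v ^ 2 \<le> (n * n) * real_of_int v ^ 2"
    using an by (rule mult_right_mono) simp
  also have "\<dots> = (n * of_int v) ^ 2" by (simp add: power_mult_distrib power2_eq_square)
  also have "\<dots> < of_int u ^ 2" using nv by (simp add: power_strict_mono)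
  finally have "0 < 3 * real_of_int u ^ 2 + of_int a * of_int v ^ 2"
    using mult_right_mono[OF abs_ge_minus_self[of "real_of_int a"] zero_le_power2[of "real_of_int v"]]
      zero_le_power2[of "real_of_int u"] by linarith
  then have "real_of_int (3 * u ^ 2 + a * v ^ 2) > 0" by simp
  then have "3 * u ^ 2 + a * v ^ 2 > 0" by (simp only: of_int_0_less_iff)
  moreover have "real_of_int (DE a b u v) > 0"
  proof -
    have "0 < real_of_int v * of_int u ^ 3" using v \<open>0 < u\<close> by simp
    then show ?thesis using dE_bounds(1)[OF n v u] unfolding DE_def by simp
  qed
  then have "DE a b u v > 0" by (simp only: of_int_0_less_iff)
  ultimately show ?thesis using v \<open>0 < u\<close> unfolding map_suitable_def by simp
qed

lemma kernel_suitable_large: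
  fixes a b u v :: int and n M :: real
  assumes n: "real_of_int (2 + 2 * (\<bar>a\<bar> + \<bar>b\<bar>)) \<le> n" and v: "2 \<le> v" and u: "n * of_int v + 1 \<le> of_int u"
    and tors: "\<And>A B. torsion a b (Pt A B) \<Longrightarrow> real_of_rat A \<le> M" and "M < n"
  shows "kernel_suitable a b u v"
proof -
  define U V where "U = real_of_int u" and "V = real_of_int v"
  have V: "2 \<le> V" using v unfolding V_def by simp
  have n2: "2 \<le> n" using n abs_ge_zero[of "real_of_int a"] abs_ge_zero[of "real_of_int b"] by simp
  have "2 * V \<le> n * V" "n * 1 \<le> n * V" using n2 V by (intro mult_right_mono mult_left_mono; simp)+
  then have U: "2 * V + 1 \<le> U" "n \<le> U" using u unfolding U_def V_def by linarith+
  have "(2 * V + 1) * (2 * V + 1) \<le> U * U" using U V by (intro mult_mono) auto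
  moreover have "(2 * V + 1) * 2 \<le> (2 * V + 1) * (2 * V + 1)" using V by (intro mult_left_mono) auto
  ultimately have "V * U * (2 * V + 2) \<le> V * U * (U * U)" using U V by (intro mult_left_mono) auto
  then have "U * V ^ 2 + U * V \<le> V * U ^ 3 / 2" by (simp add: algebra_simps power2_eq_square power3_eq_cube)
  also have "\<dots> \<le> real_of_int (dE a b u v)" using dE_bounds(1)[OF n _ u] v unfolding U_def V_def by simp
  finally have "U \<le> real_of_int (dE a b u v - u * v) / real_of_int (v ^ 2)"
    using V unfolding U_def V_def by (simp add: field_simps power2_eq_square)
  then have "real_of_rat A < real_of_int (dE a b u v - u * v) / real_of_int (v ^ 2)"
    if "torsion a b (Pt A B)" for A B using tors[OF that] \<open>M < n\<close> U by linarith
  then show ?thesis using v unfolding kernel_suitable_def by simp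
qed

lemma bound_suitable_large:
  fixes a b u v :: int and n \<epsilon> :: real
  assumes \<epsilon>: "0 < \<epsilon>" "\<epsilon> < 1/2"
    and n: "real_of_int (2 + 2 * (\<bar>a\<bar> + \<bar>b\<bar>)) \<le> n" and v: "1 \<le> v" and u: "n * of_int v + 1 \<le> of_int u"
    and nK: "(2 * exp (2 * (1 + \<epsilon> / (1 - \<epsilon>)) * (deltaE a b + dP a b Ps)) + 1)
               powr (1 / (4 - 2 * (1 + \<epsilon> / (1 - \<epsilon>)))) < n"
    and uv: "2 * real_of_int u powr (1 - \<epsilon>) \<le> of_int v"
  shows "bound_suitable a b Ps \<epsilon> u v"
proof -
  define \<alpha> where "\<alpha> = 1 + \<epsilon> / (1 - \<epsilon>)"
  define K where "K = exp (2 * \<alpha> * (deltaE a b + dP a b Ps))"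
  define U V where "U = real_of_int u" and "V = real_of_int v"
  define G where "G = real_of_int (dE a b u v) / V"
  have \<alpha>: "(1 - \<epsilon>) * \<alpha> = 1" "1 < \<alpha>" "\<alpha> < 2" unfolding \<alpha>_def using \<epsilon> by (simp_all add: field_simps)
  have V: "1 \<le> V" using v unfolding V_def by simp
  have n2: "2 \<le> n" using n abs_ge_zero[of "real_of_int a"] abs_ge_zero[of "real_of_int b"] by simp
  have "n * 1 \<le> n * V" "1 * V \<le> n * V" using n2 V by (intro mult_left_mono mult_right_mono; simp)+
  then have U: "n \<le> U" "V \<le> U" "1 \<le> U" using u n2 V unfolding U_def V_def by linarith+
  have VG: "V * G = real_of_int (dE a b u v)" unfolding G_def using V by simp
  have "V * U ^ 3 \<le> V * (2 * G)" "V * (2 * G) \<le> V * (3 * U ^ 3)"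
    using dE_bounds[OF n v u] VG unfolding U_def V_def by (simp_all add: algebra_simps)
  then have G: "U ^ 3 \<le> 2 * G" "G \<le> 2 * U ^ 3" using V U by (simp_all add: mult_le_cancel_left_pos)
  have "2 * K + 1 = ((2 * K + 1) powr (1 / (4 - 2 * \<alpha>))) powr (4 - 2 * \<alpha>)"
    using \<alpha> unfolding K_def by (simp add: powr_powr add_pos_pos)
  also have "\<dots> < U powr (4 - 2 * \<alpha>)"
    using nK U \<alpha> unfolding K_def \<alpha>_def by (intro powr_less_mono2) auto
  finally have UK: "2 * K < U powr (4 - 2 * \<alpha>)" by simp
  have "(1/4 * (U * V + V ^ 2)) powr \<alpha> * K < V * G"
    using lower_powr_bound[OF \<alpha>(2,3) _ _ U(2) UK G(1)] V unfolding K_def by simp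
  moreover have "V * G < (V ^ 2 * (U * V + V ^ 2)) powr \<alpha>"
    using upper_powr_bound[OF \<alpha>(1) _ _ U(3) _ G(2)] \<alpha> \<epsilon> uv unfolding U_def V_def by simp
  ultimately have "(1/4 * (U * V + V ^ 2)) powr \<alpha> * K < real_of_int (dE a b u v)"
    "real_of_int (dE a b u v) < (V ^ 2 * (U * V + V ^ 2)) powr \<alpha>" unfolding VG by simp_all
  then show ?thesis using U V unfolding bound_suitable_def Let_def U_def V_def \<alpha>_def K_def
    by (simp add: mult.commute)
qed

lemma suitable_large:
  fixes n :: nat and u v :: int and \<epsilon> M :: real
  assumes \<epsilon>: "0 < \<epsilon>" "\<epsilon> < 1/2" and n: "real_of_int (2 + 2 * (\<bar>a\<bar> + \<bar>b\<bar>)) \<le> real n"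
    and tors: "\<And>A B. torsion a b (Pt A B) \<Longrightarrow> real_of_rat A \<le> M" and "M < real n"
    and nK: "(2 * exp (2 * (1 + \<epsilon> / (1 - \<epsilon>)) * (deltaE a b + dP a b Ps)) + 1)
               powr (1 / (4 - 2 * (1 + \<epsilon> / (1 - \<epsilon>)))) < real n"
    and v: "2 \<le> v" and u: "int n * v + 1 \<le> u" and uv: "2 * real_of_int u powr (1 - \<epsilon>) \<le> of_int v"
  shows "suitable a b Ps \<epsilon> u v"
proof -
  have u': "real n * of_int v + 1 \<le> of_int u" using of_int_le_iff[THEN iffD2, OF u] by simp
  show ?thesis
    using map_suitable_large[OF n _ u'] kernel_suitable_large[OF n v u' tors \<open>M < real n\<close>]
      bound_suitable_large[OF \<epsilon> n _ u' nK uv] v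
    unfolding suitable_def by simp
qed

section \<open>Counting unsuitable pairs\<close>

lemma card_int_box_le:
  fixes Y L :: real
  assumes "0 \<le> Y" "0 \<le> L"
  shows "finite {(x :: int, y :: int). 0 < x \<and> of_int x < Y \<and> 0 < y \<and> of_int y \<le> L}"
    and "real (card {(x :: int, y :: int). 0 < x \<and> of_int x < Y \<and> 0 < y \<and> of_int y \<le> L}) \<le> Y * L"
proof -
  let ?S = "{(x :: int, y :: int). 0 < x \<and> of_int x < Y \<and> 0 < y \<and> of_int y \<le> L}"
  let ?B = "{1..\<lfloor>Y\<rfloor>} \<times> {1..\<lfloor>L\<rfloor>}"
  have sub: "?S \<subseteq> ?B"
  proof
    fix p assume "p \<in> ?S"
    then obtain x y where "p = (x, y)" "0 < x" "of_int x < Y" "0 < y" "of_int y \<le> L" by blast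
    then show "p \<in> ?B" using le_floor_iff[of x Y] le_floor_iff[of y L] by simp
  qed
  then show "finite ?S" by (rule finite_subset) simp
  have "card ?S \<le> nat \<lfloor>Y\<rfloor> * nat \<lfloor>L\<rfloor>"
    using card_mono[OF _ sub] by (simp add: card_cartesian_product)
  then have "real (card ?S) \<le> real (nat \<lfloor>Y\<rfloor>) * real (nat \<lfloor>L\<rfloor>)"
    by (simp only: of_nat_le_iff of_nat_mult[symmetric])
  also have "\<dots> \<le> Y * L" using assms by (intro mult_mono) (auto simp: of_nat_nat)
  finally show "real (card ?S) \<le> Y * L" .
qed

lemma powr_linear_form_le:
  fixes x y Y \<epsilon> n :: real
  assumes "0 \<le> \<epsilon>" "\<epsilon> \<le> 1" "0 < x" "x < Y" "0 < y" "y < Y" "0 \<le> n"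
  shows "(x + n * y) powr (1 - \<epsilon>) \<le> (1 + n) * Y powr (1 - \<epsilon>)"
proof -
  have "x + n * y \<le> (1 + n) * Y" using assms by (simp add: distrib_right mult_left_mono add_mono less_imp_le)
  then have "(x + n * y) powr (1 - \<epsilon>) \<le> ((1 + n) * Y) powr (1 - \<epsilon>)"
    using assms by (intro powr_mono2) (auto intro: add_pos_nonneg)
  also have "\<dots> = (1 + n) powr (1 - \<epsilon>) * Y powr (1 - \<epsilon>)" using assms by (simp add: powr_mult)
  also have "\<dots> \<le> (1 + n) * Y powr (1 - \<epsilon>)"
    using powr_mono[of "1 - \<epsilon>" 1 "1 + n"] assms by (intro mult_right_mono) auto
  finally show ?thesis .
qed

lemma unsuitable_pair_y_le:
  fixes n :: nat and x y :: int and Y \<epsilon> :: real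
  assumes \<epsilon>: "0 < \<epsilon>" "\<epsilon> < 1" and Y: "1 \<le> Y"
    and xy: "0 < x" "of_int x < Y" "0 < y" "of_int y < Y" and bad: "\<not> suitable a b Ps \<epsilon> (x + int n * y) y"
    and good: "\<And>u v. 2 \<le> v \<Longrightarrow> int n * v + 1 \<le> u \<Longrightarrow> 2 * real_of_int u powr (1 - \<epsilon>) \<le> of_int v
      \<Longrightarrow> suitable a b Ps \<epsilon> u v"
  shows "of_int y \<le> 2 * (1 + real n) * Y powr (1 - \<epsilon>)"
proof (rule ccontr)
  define L where "L = 2 * (1 + real n) * Y powr (1 - \<epsilon>)"
  assume "\<not> of_int y \<le> 2 * (1 + real n) * Y powr (1 - \<epsilon>)"
  then have yL: "L < of_int y" unfolding L_def by simp
  have "2 * 1 * 1 \<le> L" unfolding L_def using Y \<epsilon> by (intro mult_mono ge_one_powr_ge_zero) auto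
  with yL have "2 \<le> y" by simp
  have "real_of_int (x + int n * y) powr (1 - \<epsilon>) \<le> (1 + real n) * Y powr (1 - \<epsilon>)"
    using powr_linear_form_le[of \<epsilon> "of_int x" Y "of_int y" "real n"] xy \<epsilon> by simp
  with yL have "2 * real_of_int (x + int n * y) powr (1 - \<epsilon>) \<le> of_int y" unfolding L_def by linarith
  with good[OF \<open>2 \<le> y\<close>] bad xy(1) show False by simp
qed

lemma A_count_le:
  fixes n :: nat and Y \<epsilon> :: real
  assumes \<epsilon>: "0 < \<epsilon>" "\<epsilon> < 1" and Y: "1 \<le> Y"
    and good: "\<And>u v. 2 \<le> v \<Longrightarrow> int n * v + 1 \<le> u \<Longrightarrow> 2 * real_of_int u powr (1 - \<epsilon>) \<le> of_int v
      \<Longrightarrow> suitable a b Ps \<epsilon> u v"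
  shows "real (A_count a b Ps \<epsilon> n Y) \<le> 2 * (1 + real n) * Y powr (2 - \<epsilon>)"
proof -
  define L where "L = 2 * (1 + real n) * Y powr (1 - \<epsilon>)"
  have L: "0 \<le> L" unfolding L_def by simp
  have "{(x, y). 0 < x \<and> real_of_int x < Y \<and> 0 < y \<and> real_of_int y < Y \<and> \<not> suitable a b Ps \<epsilon> (x + int n * y) y}
    \<subseteq> {(x, y). 0 < x \<and> of_int x < Y \<and> 0 < y \<and> of_int y \<le> L}"
    using unsuitable_pair_y_le[OF \<epsilon> Y _ _ _ _ _ good] unfolding L_def by auto
  then have "card {(x, y). 0 < x \<and> real_of_int x < Y \<and> 0 < y \<and> real_of_int y < Y \<and>
      \<not> suitable a b Ps \<epsilon> (x + int n * y) y} \<le> card {(x, y). 0 < x \<and> of_int x < Y \<and> 0 < y \<and> of_int y \<le> L}"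
    using card_int_box_le(1)[of Y L] Y L by (intro card_mono) auto
  then have "real (A_count a b Ps \<epsilon> n Y) \<le> Y * L"
    unfolding A_count_def suitable_def[symmetric] using card_int_box_le(2)[of Y L] Y L by linarith
  also have "\<dots> = 2 * (1 + real n) * Y powr (2 - \<epsilon>)"
    unfolding L_def using Y powr_add[of Y 1 "1 - \<epsilon>"] by simp
  finally show ?thesis .
qed

theorem lemma4p2:
  fixes a4 a6 :: int and Ps :: "ecpt list" and \<epsilon> :: real
  assumes "elliptic a4 a6"
    and "lin_indep a4 a6 Ps"
    and "0 < \<epsilon>" and "\<epsilon> < 1/2"
  shows "\<exists>N>0. \<forall>n::nat. real n > N \<longrightarrow>
           (\<lambda>Y. real (A_count a4 a6 Ps \<epsilon> n Y)) \<in> O[at_top](\<lambda>Y. Y powr (2 - \<epsilon>))"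
proof -
  define M :: real where "M = max (1 + \<bar>a4\<bar> + \<bar>a6\<bar>) (max (dbl_cofactor_norm a4 a6) (8 * sd_cofactor_norm a4 a6))"
  define \<alpha> where "\<alpha> = 1 + \<epsilon> / (1 - \<epsilon>)"
  define N where "N = max (real_of_int (2 + 2 * (\<bar>a4\<bar> + \<bar>a6\<bar>)))
    (max M ((2 * exp (2 * \<alpha> * (deltaE a4 a6 + dP a4 a6 Ps)) + 1) powr (1 / (4 - 2 * \<alpha>))))"
  have tors: "\<And>A B. torsion a4 a6 (Pt A B) \<Longrightarrow> real_of_rat A \<le> M"
    using torsion_x_le[OF assms(1)] unfolding M_def by blast
  have "(\<lambda>Y. real (A_count a4 a6 Ps \<epsilon> n Y)) \<in> O[at_top](\<lambda>Y. Y powr (2 - \<epsilon>))" if "N < real n" for n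
  proof (rule bigoI)
    have n: "real_of_int (2 + 2 * (\<bar>a4\<bar> + \<bar>a6\<bar>)) \<le> real n" "M < real n"
      "(2 * exp (2 * \<alpha> * (deltaE a4 a6 + dP a4 a6 Ps)) + 1) powr (1 / (4 - 2 * \<alpha>)) < real n"
      using that unfolding N_def by simp_all
    have bound: "real (A_count a4 a6 Ps \<epsilon> n Y) \<le> 2 * (1 + real n) * Y powr (2 - \<epsilon>)" if "1 \<le> Y" for Y
      using A_count_le[OF assms(3) _ that suitable_large[OF assms(3,4) n(1) tors n(2) n(3)[unfolded \<alpha>_def]]]
        assms(4) by simp
    show "\<forall>\<^sub>F Y in at_top. norm (real (A_count a4 a6 Ps \<epsilon> n Y)) \<le> 2 * (1 + real n) * norm (Y powr (2 - \<epsilon>))"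
      by (rule eventually_mono[OF eventually_ge_at_top[of "1 :: real"]]) (use bound in simp)
  qed
  moreover have "N > 0" unfolding N_def by simp
  ultimately show ?thesis by blast
qed

end
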